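(* Let $k\ge1$, $\lambda>0$, $0<\theta<1$, and $F(x,y,\theta)=\frac{1+x+\theta y}{1+x+y}$. Define sequences by $z^-_{1,1}=z^-_{2,1}=\lambda\theta^k$, $z^+_{1,1}=z^+_{2,1}=\lambda$ and $$z^-_{1,n+1}=\lambda F(z^-_{1,n},z^+_{2,n},\theta)^k,\ z^+_{1,n+1}=\lambda F(z^+_{1,n},z^-_{2,n},\theta)^k,\ z^-_{2,n+1}=\lambda F(z^-_{2,n},z^+_{1,n},\theta)^k,\ z^+_{2,n+1}=\lambda F(z^+_{2,n},z^-_{1,n},\theta)^k.$$ Then the limits $z^\pm_j=\lim_{n\to\infty}z^\pm_{j,n}$ ($j=1,2$) exist, the vector $(z^-_1,z^+_1,z^-_2,z^+_2)$ solves $$z^-_1=\lambda F(z^-_1,z^+_2,\theta)^k,\ z^+_1=\lambda F(z^+_1,z^-_2,\theta)^k,\ z^-_2=\lambda F(z^-_2,z^+_1,\theta)^k,\ z^+_2=\lambda F(z^+_2,z^-_1,\theta)^k,\quad ( * )$$ and every family $(z_{1,i},z_{2,i})_{i\in\mathbb{T}^k}$ of positive numbers satisfying, for all $i\in\mathbb{T}^k$, $$z_{1,i}=\lambda\prod_{j\in S(i)}F(z_{1,j},z_{2,j},\theta),\qquad z_{2,i}=\lambda\prod_{j\in S(i)}F(z_{2,j},z_{1,j},\theta)\quad ( ** )$$ satisfies $z^-_j\le z_{j,i}\le z^+_j$ for $j=1,2$ and all $i\in\mathbb{T}^k$.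
   Context: $\mathbb{T}^k$ is the rooted Cayley tree of order $k$ and $S(i)$ denotes the set of the $k$ direct successors of a vertex $i$ (neighbours of $i$ one step further from the root). System ( ** ) is the exponentiated form (with $z_{1,i}=e^{\tilde h_{+,i}}$, $z_{2,i}=e^{\tilde h_{-,i}}$) of the compatibility equations for splitting Gibbs measures of the Soft-Core Widom–Rowlinson model. *)

theory Defs
  imports Complex_Main
begin

definition F :: "real \<Rightarrow> real \<Rightarrow> real \<Rightarrow> real" where
  "F x y \<theta> = (1 + x + \<theta> * y) / (1 + x + y)"

text \<open>zseq lam th k n = (z^-_{1,n+1}, z^+_{1,n+1}, z^-_{2,n+1}, z^+_{2,n+1}) (shift by one:
  index 0 here corresponds to index 1 in the paper).\<close>
fun zseq :: "real \<Rightarrow> real \<Rightarrow> nat \<Rightarrow> nat \<Rightarrow> real \<times> real \<times> real \<times> real" where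
  "zseq lam th k 0 = (lam * th ^ k, lam, lam * th ^ k, lam)"
| "zseq lam th k (Suc n) =
     (case zseq lam th k n of (a, b, c, d) \<Rightarrow>
       (lam * F a d th ^ k, lam * F b c th ^ k, lam * F c b th ^ k, lam * F d a th ^ k))"

definition zm1 :: "real \<Rightarrow> real \<Rightarrow> nat \<Rightarrow> nat \<Rightarrow> real" where
  "zm1 lam th k n = fst (zseq lam th k n)"
definition zp1 :: "real \<Rightarrow> real \<Rightarrow> nat \<Rightarrow> nat \<Rightarrow> real" where
  "zp1 lam th k n = fst (snd (zseq lam th k n))"
definition zm2 :: "real \<Rightarrow> real \<Rightarrow> nat \<Rightarrow> nat \<Rightarrow> real" where
  "zm2 lam th k n = fst (snd (snd (zseq lam th k n)))"
definition zp2 :: "real \<Rightarrow> real \<Rightarrow> nat \<Rightarrow> nat \<Rightarrow> real" where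
  "zp2 lam th k n = snd (snd (snd (zseq lam th k n)))"

text \<open>Rooted Cayley tree of order k: vertices are finite words over {0..<k}
  (the root is the empty word); the direct successors of i are m # i, m < k.\<close>
definition tree_vertices :: "nat \<Rightarrow> nat list set" where
  "tree_vertices k = {xs. \<forall>m \<in> set xs. m < k}"

definition succs :: "nat \<Rightarrow> nat list \<Rightarrow> nat list set" where
  "succs k i = {m # i | m. m < k}"

end

theory Submission
  imports Defs
begin

text \<open>Since \<open>F x y \<theta>\<close> increases in \<open>x\<close> and decreases in \<open>y\<close>, the map sending a box
  \<open>[a, b] \<times> [c, d]\<close> for \<open>(z\<^sub>1, z\<^sub>2)\<close> to \<open>[\<lambda>F(a,d)\<^sup>k, \<lambda>F(b,c)\<^sup>k] \<times> [\<lambda>F(c,b)\<^sup>k, \<lambda>F(d,a)\<^sup>k]\<close>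
  is monotone, and the sequence \<open>zseq\<close> iterates it starting from the box
  \<open>[\<lambda>\<theta>\<^sup>k, \<lambda>]\<^sup>2\<close>. That box contains every positive solution of (**), because each factor
  \<open>F\<close> lies in \<open>[\<theta>, 1]\<close>; it contains its own image, so the boxes shrink and converge to
  a fixed point of the map. Finally, if all successors of a vertex lie in the
  \<open>n\<close>-th box, the vertex lies in the \<open>(n+1)\<close>-th one, so by induction on \<open>n\<close> (over all
  vertices simultaneously) every solution stays in every box, hence in the limit box.\<close>

definition tree_solution ::
    "real \<Rightarrow> real \<Rightarrow> nat \<Rightarrow> (nat list \<Rightarrow> real) \<Rightarrow> (nat list \<Rightarrow> real) \<Rightarrow> bool" where
  "tree_solution lam th k z1 z2 \<longleftrightarrow>
     (\<forall>i \<in> tree_vertices k. z1 i > 0 \<and> z2 i > 0 \<and>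
        z1 i = lam * (\<Prod>j \<in> succs k i. F (z1 j) (z2 j) th) \<and>
        z2 i = lam * (\<Prod>j \<in> succs k i. F (z2 j) (z1 j) th))"

lemma F_mono:
  assumes "0 \<le> x" "x \<le> x'" "0 \<le> y'" "y' \<le> y" "th \<le> 1"
  shows "F x y th \<le> F x' y' th"
proof -
  have pos: "1 + x + y > 0" "1 + x' + y' > 0"
    using assms by auto
  have F_eq: "F u v th = 1 - (1 - th) * (v / (1 + u + v))" if "1 + u + v > 0" for u v
    using that unfolding F_def by (simp add: field_simps)
  have "y' * x \<le> y * x'"
    using assms by (simp add: mult_mono)
  then have "y' * (1 + x + y) \<le> y * (1 + x' + y')"
    using assms by (simp add: algebra_simps)
  then have "y' / (1 + x' + y') \<le> y / (1 + x + y)"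
    using pos by (simp add: divide_simps)
  then have "(1 - th) * (y' / (1 + x' + y')) \<le> (1 - th) * (y / (1 + x + y))"
    by (rule mult_left_mono) (use assms in simp)
  then show ?thesis
    using F_eq[OF pos(1)] F_eq[OF pos(2)] by linarith
qed

lemma F_between:
  assumes "0 \<le> x" "0 \<le> y" "0 \<le> th" "th \<le> 1"
  shows "th \<le> F x y th \<and> F x y th \<le> 1"
proof -
  have pos: "1 + x + y > 0"
    using assms by auto
  have "th * x \<le> x" "th * y \<le> y"
    using assms by (simp_all add: mult_left_le_one_le)
  then show ?thesis
    using pos assms unfolding F_def by (simp add: divide_simps algebra_simps)
qed

lemma prod_between_power:
  fixes f :: "'a \<Rightarrow> real"
  assumes "finite S" "\<forall>j\<in>S. lo \<le> f j \<and> f j \<le> hi" "0 \<le> lo"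
  shows "lo ^ card S \<le> prod f S \<and> prod f S \<le> hi ^ card S"
proof
  have "prod (\<lambda>_. lo) S \<le> prod f S"
    by (rule prod_mono) (use assms in auto)
  then show "lo ^ card S \<le> prod f S"
    by simp
  have "prod f S \<le> prod (\<lambda>_. hi) S"
    by (rule prod_mono) (use assms in force)
  then show "prod f S \<le> hi ^ card S"
    by simp
qed

lemma prod_F_between:
  assumes "finite S" "0 \<le> lo1" "0 \<le> lo2" "0 \<le> hi2" "0 \<le> th" "th \<le> 1"
    and "\<forall>j\<in>S. lo1 \<le> u j \<and> u j \<le> hi1 \<and> lo2 \<le> v j \<and> v j \<le> hi2"
  shows "F lo1 hi2 th ^ card S \<le> (\<Prod>j\<in>S. F (u j) (v j) th) \<and>
         (\<Prod>j\<in>S. F (u j) (v j) th) \<le> F hi1 lo2 th ^ card S"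
proof (rule prod_between_power[OF assms(1)])
  show "\<forall>j\<in>S. F lo1 hi2 th \<le> F (u j) (v j) th \<and> F (u j) (v j) th \<le> F hi1 lo2 th"
    using assms by (auto intro!: F_mono)
  show "0 \<le> F lo1 hi2 th"
    using F_between[of lo1 hi2 th] assms by fastforce
qed

lemma finite_succs: "finite (succs k i)"
  and card_succs: "card (succs k i) = k"
proof -
  have image: "succs k i = (\<lambda>m. m # i) ` {..<k}"
    unfolding succs_def by auto
  then show "finite (succs k i)"
    by simp
  show "card (succs k i) = k"
    unfolding image by (simp add: card_image inj_on_def)
qed

lemma succs_in_tree_vertices:
  "i \<in> tree_vertices k \<Longrightarrow> j \<in> succs k i \<Longrightarrow> j \<in> tree_vertices k"
  unfolding succs_def tree_vertices_def by auto

lemma zseq_0: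
  "zm1 lam th k 0 = lam * th ^ k" "zp1 lam th k 0 = lam"
  "zm2 lam th k 0 = lam * th ^ k" "zp2 lam th k 0 = lam"
  by (simp_all add: zm1_def zp1_def zm2_def zp2_def)

lemma zseq_Suc:
  "zm1 lam th k (Suc n) = lam * F (zm1 lam th k n) (zp2 lam th k n) th ^ k"
  "zp1 lam th k (Suc n) = lam * F (zp1 lam th k n) (zm2 lam th k n) th ^ k"
  "zm2 lam th k (Suc n) = lam * F (zm2 lam th k n) (zp1 lam th k n) th ^ k"
  "zp2 lam th k (Suc n) = lam * F (zp2 lam th k n) (zm1 lam th k n) th ^ k"
  by (simp_all add: zm1_def zp1_def zm2_def zp2_def split: prod.split)

context
  fixes lam th :: real and k :: nat
  assumes lam: "lam > 0" and th: "0 < th" "th < 1"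
begin

lemma zseq_between:
  "lam * th ^ k \<le> zm1 lam th k n \<and> zm1 lam th k n \<le> lam \<and>
   lam * th ^ k \<le> zp1 lam th k n \<and> zp1 lam th k n \<le> lam \<and>
   lam * th ^ k \<le> zm2 lam th k n \<and> zm2 lam th k n \<le> lam \<and>
   lam * th ^ k \<le> zp2 lam th k n \<and> zp2 lam th k n \<le> lam"
proof (induction n)
  case 0
  have "th ^ k \<le> 1"
    using th by (simp add: power_le_one)
  with lam show ?case
    unfolding zseq_0 by simp
next
  case (Suc n)
  have image_between: "lam * th ^ k \<le> lam * F x y th ^ k \<and> lam * F x y th ^ k \<le> lam"
    if "0 \<le> x" "0 \<le> y" for x y
  proof -
    have "th \<le> F x y th" "F x y th \<le> 1"
      using F_between[OF that] th by auto
    with th lam show ?thesis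
      by (simp add: power_mono power_le_one)
  qed
  have "0 \<le> lam * th ^ k"
    using lam th by simp
  with Suc.IH have "0 \<le> zm1 lam th k n" "0 \<le> zp1 lam th k n"
      "0 \<le> zm2 lam th k n" "0 \<le> zp2 lam th k n"
    by linarith+
  then show ?case
    unfolding zseq_Suc using image_between by simp
qed

lemma box_step_monotone:
  assumes "0 \<le> a" "a \<le> a'" "0 \<le> b'" "b' \<le> b" "0 \<le> c" "c \<le> c'" "0 \<le> d'" "d' \<le> d"
  shows "lam * F a d th ^ k \<le> lam * F a' d' th ^ k \<and> lam * F b' c' th ^ k \<le> lam * F b c th ^ k \<and>
         lam * F c b th ^ k \<le> lam * F c' b' th ^ k \<and> lam * F d' a' th ^ k \<le> lam * F d a th ^ k"
proof -
  have "lam * F x y th ^ k \<le> lam * F x' y' th ^ k"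
    if "0 \<le> x" "x \<le> x'" "0 \<le> y'" "y' \<le> y" for x x' y y'
  proof -
    have "0 \<le> F x y th"
      using F_between[of x y th] that th by fastforce
    moreover have "F x y th \<le> F x' y' th"
      using F_mono that th by simp
    ultimately show ?thesis
      using lam by (simp add: power_mono)
  qed
  with assms show ?thesis
    by simp
qed

lemma zseq_nested:
  "zm1 lam th k n \<le> zm1 lam th k (Suc n) \<and> zp1 lam th k (Suc n) \<le> zp1 lam th k n \<and>
   zm2 lam th k n \<le> zm2 lam th k (Suc n) \<and> zp2 lam th k (Suc n) \<le> zp2 lam th k n"
proof (induction n)
  case 0
  show ?case
    using zseq_between[of "Suc 0"] by (simp add: zseq_0)
next
  case (Suc n)
  have "0 \<le> lam * th ^ k"
    using lam th by simp
  then have "0 \<le> zm1 lam th k n" "0 \<le> zp1 lam th k (Suc n)"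
      "0 \<le> zm2 lam th k n" "0 \<le> zp2 lam th k (Suc n)"
    using zseq_between[of n] zseq_between[of "Suc n"] by linarith+
  note mono = box_step_monotone[OF this(1) _ this(2) _ this(3) _ this(4)]
  show ?case
    using mono Suc.IH zseq_Suc[of lam th k n] by (simp only: zseq_Suc[of lam th k "Suc n"]) auto
qed

lemma tree_solution_in_box_0:
  assumes sol: "tree_solution lam th k z1 z2" and i: "i \<in> tree_vertices k"
  shows "zm1 lam th k 0 \<le> z1 i \<and> z1 i \<le> zp1 lam th k 0 \<and>
         zm2 lam th k 0 \<le> z2 i \<and> z2 i \<le> zp2 lam th k 0"
proof -
  have pos: "\<forall>j\<in>succs k i. z1 j > 0 \<and> z2 j > 0"
    using sol succs_in_tree_vertices[OF i] unfolding tree_solution_def by blast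
  have "th ^ k \<le> (\<Prod>j\<in>succs k i. F (u j) (v j) th) \<and> (\<Prod>j\<in>succs k i. F (u j) (v j) th) \<le> 1"
    if "\<forall>j\<in>succs k i. u j > 0 \<and> v j > 0" for u v
    using prod_between_power[OF finite_succs[of k i], of th "\<lambda>j. F (u j) (v j) th" 1]
      F_between that th by (simp add: card_succs less_imp_le)
  from this[of z1 z2] this[of z2 z1] pos sol i lam show ?thesis
    unfolding tree_solution_def zseq_0 by auto
qed

lemma tree_solution_in_box_Suc:
  assumes sol: "tree_solution lam th k z1 z2" and i: "i \<in> tree_vertices k"
    and succs_in_box: "\<forall>j\<in>succs k i. zm1 lam th k n \<le> z1 j \<and> z1 j \<le> zp1 lam th k n \<and>
                                    zm2 lam th k n \<le> z2 j \<and> z2 j \<le> zp2 lam th k n"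
  shows "zm1 lam th k (Suc n) \<le> z1 i \<and> z1 i \<le> zp1 lam th k (Suc n) \<and>
         zm2 lam th k (Suc n) \<le> z2 i \<and> z2 i \<le> zp2 lam th k (Suc n)"
proof -
  have "0 \<le> lam * th ^ k"
    using lam th by simp
  then have nonneg: "0 \<le> zm1 lam th k n" "0 \<le> zm2 lam th k n"
    and upper_nonneg: "0 \<le> zp1 lam th k n" "0 \<le> zp2 lam th k n"
    using zseq_between[of n] by linarith+
  from succs_in_box have "\<forall>j\<in>succs k i. zm2 lam th k n \<le> z2 j \<and> z2 j \<le> zp2 lam th k n \<and>
                                         zm1 lam th k n \<le> z1 j \<and> z1 j \<le> zp1 lam th k n"
    by blast
  note prod1 = prod_F_between[OF finite_succs nonneg upper_nonneg(2) _ _ succs_in_box]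
   and prod2 = prod_F_between[OF finite_succs nonneg(2,1) upper_nonneg(1) _ _ this]
  from prod1 prod2 sol i lam th show ?thesis
    unfolding tree_solution_def zseq_Suc card_succs by (auto intro: mult_left_mono)
qed

lemma tree_solution_in_box:
  assumes "tree_solution lam th k z1 z2" "i \<in> tree_vertices k"
  shows "zm1 lam th k n \<le> z1 i \<and> z1 i \<le> zp1 lam th k n \<and>
         zm2 lam th k n \<le> z2 i \<and> z2 i \<le> zp2 lam th k n"
  using assms(2)
proof (induction n arbitrary: i)
  case 0
  then show ?case
    using tree_solution_in_box_0[OF assms(1)] by blast
next
  case (Suc n)
  then show ?case
    using tree_solution_in_box_Suc[OF assms(1)] succs_in_tree_vertices by blast
qed

lemma tree_solution_in_limit_box:
  assumes "(\<lambda>n. zm1 lam th k n) \<longlonglongrightarrow> a" "(\<lambda>n. zp1 lam th k n) \<longlonglongrightarrow> b"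
    "(\<lambda>n. zm2 lam th k n) \<longlonglongrightarrow> c" "(\<lambda>n. zp2 lam th k n) \<longlonglongrightarrow> d"
    and "tree_solution lam th k z1 z2" "i \<in> tree_vertices k"
  shows "a \<le> z1 i \<and> z1 i \<le> b \<and> c \<le> z2 i \<and> z2 i \<le> d"
  using tree_solution_in_box[OF assms(5,6)] assms(1-4)
  by (meson LIMSEQ_le_const LIMSEQ_le_const2)

lemma zseq_convergent:
  obtains a b c d where
    "(\<lambda>n. zm1 lam th k n) \<longlonglongrightarrow> a" "(\<lambda>n. zp1 lam th k n) \<longlonglongrightarrow> b"
    "(\<lambda>n. zm2 lam th k n) \<longlonglongrightarrow> c" "(\<lambda>n. zp2 lam th k n) \<longlonglongrightarrow> d"
proof -
  have "incseq (\<lambda>n. zm1 lam th k n)" "decseq (\<lambda>n. zp1 lam th k n)"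
    "incseq (\<lambda>n. zm2 lam th k n)" "decseq (\<lambda>n. zp2 lam th k n)"
    using zseq_nested by (simp_all add: incseq_SucI decseq_SucI)
  with zseq_between that show ?thesis
    by (metis incseq_convergent decseq_convergent)
qed

end

lemma tendsto_F_recursion_fixed_point:
  assumes X: "X \<longlonglongrightarrow> a" and Y: "Y \<longlonglongrightarrow> d" and "0 \<le> a" "0 \<le> d"
    and recursion: "\<And>n. X (Suc n) = lam * F (X n) (Y n) th ^ k"
  shows "a = lam * F a d th ^ k"
proof -
  have "(\<lambda>n. lam * F (X n) (Y n) th ^ k) \<longlonglongrightarrow> lam * F a d th ^ k"
    unfolding F_def using assms by (intro tendsto_intros X Y) auto
  moreover have "(\<lambda>n. X (Suc n)) \<longlonglongrightarrow> a"
    using X by (rule LIMSEQ_Suc)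
  ultimately show ?thesis
    unfolding recursion using LIMSEQ_unique by blast
qed

theorem mainTheorem12:
  fixes k :: nat and lam \<theta> :: real
  assumes "k \<ge> 1" and "lam > 0" and "0 < \<theta>" and "\<theta> < 1"
  shows "\<exists>a b c d.
     (\<lambda>n. zm1 lam \<theta> k n) \<longlonglongrightarrow> a \<and> (\<lambda>n. zp1 lam \<theta> k n) \<longlonglongrightarrow> b \<and>
     (\<lambda>n. zm2 lam \<theta> k n) \<longlonglongrightarrow> c \<and> (\<lambda>n. zp2 lam \<theta> k n) \<longlonglongrightarrow> d \<and>
     a = lam * F a d \<theta> ^ k \<and> b = lam * F b c \<theta> ^ k \<and>
     c = lam * F c b \<theta> ^ k \<and> d = lam * F d a \<theta> ^ k \<and>
     (\<forall>z1 z2 :: nat list \<Rightarrow> real.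
        (\<forall>i \<in> tree_vertices k. z1 i > 0 \<and> z2 i > 0 \<and>
           z1 i = lam * (\<Prod>j \<in> succs k i. F (z1 j) (z2 j) \<theta>) \<and>
           z2 i = lam * (\<Prod>j \<in> succs k i. F (z2 j) (z1 j) \<theta>))
        \<longrightarrow> (\<forall>i \<in> tree_vertices k. a \<le> z1 i \<and> z1 i \<le> b \<and> c \<le> z2 i \<and> z2 i \<le> d))"
proof -
  note params = assms(2-4)
  obtain a b c d where lim:
    "(\<lambda>n. zm1 lam \<theta> k n) \<longlonglongrightarrow> a" "(\<lambda>n. zp1 lam \<theta> k n) \<longlonglongrightarrow> b"
    "(\<lambda>n. zm2 lam \<theta> k n) \<longlonglongrightarrow> c" "(\<lambda>n. zp2 lam \<theta> k n) \<longlonglongrightarrow> d"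
    using zseq_convergent[OF params] .
  have "0 \<le> lam * \<theta> ^ k"
    using params by simp
  then have nonneg: "0 \<le> a" "0 \<le> b" "0 \<le> c" "0 \<le> d"
    using lim zseq_between[OF params] by (meson LIMSEQ_le_const order.trans)+
  have "a = lam * F a d \<theta> ^ k" "b = lam * F b c \<theta> ^ k"
    "c = lam * F c b \<theta> ^ k" "d = lam * F d a \<theta> ^ k"
    using tendsto_F_recursion_fixed_point[OF lim(1) lim(4) nonneg(1,4) zseq_Suc(1)]
      tendsto_F_recursion_fixed_point[OF lim(2) lim(3) nonneg(2,3) zseq_Suc(2)]
      tendsto_F_recursion_fixed_point[OF lim(3) lim(2) nonneg(3,2) zseq_Suc(3)]
      tendsto_F_recursion_fixed_point[OF lim(4) lim(1) nonneg(4,1) zseq_Suc(4)] .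
  with lim tree_solution_in_limit_box[OF params lim] show ?thesis
    unfolding tree_solution_def by blast
qed

end
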